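(* Let $f_1,\ldots,f_N\colon[0,1]\to[0,1]$ be $C^1$-diffeomorphisms onto their images, $\mathcal I_P=\{i\colon f_i\text{ preserves orientation}\}$, $\mathcal I_R=\{i\colon f_i\text{ reverses orientation}\}$. Let $A=(a_{ij})_{i,j=1}^{2N}$ be given by $a_{ij}=1$ if ($i\in\mathcal I_P$ and $j\in\{1,\ldots,N\}$), or ($i\in\mathcal I_R$ and $j\in\{N+1,\ldots,2N\}$), or ($i-N\in\mathcal I_P$ and $j\in\{N+1,\ldots,2N\}$), or ($i-N\in\mathcal I_R$ and $j\in\{1,\ldots,N\}$), and $a_{ij}=0$ otherwise. Let $\Sigma_A\subset\{1,\ldots,2N\}^{\mathbb Z}$ be the set of $A$-admissible sequences (those $\omega$ with $a_{\omega_n\omega_{n+1}}=1$ for all $n$), $\sigma_A$ the shift on $\Sigma_A$, and $\sigma$ the shift on $\Sigma_N=\{1,\ldots,N\}^{\mathbb Z}$. Define $\pi\colon\Sigma_A\to\Sigma_N$ by $\pi(\omega)_n=\overline{\omega_n}$, where $\overline i=i$ for $i\le N$ and $\overline i=i-N$ for $i>N$. Then $\pi$ is a two-to-one semi-conjugation between $\sigma_A$ and $\sigma$: $\pi$ is continuous, surjective, $\pi\circ\sigma_A=\sigma\circ\pi$, and each point of $\Sigma_N$ has exactly two preimages under $\pi$. *)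

theory Defs
  imports "HOL-Analysis.Analysis"
begin

definition C1_on :: "real set \<Rightarrow> (real \<Rightarrow> real) \<Rightarrow> bool" where
  "C1_on S g \<longleftrightarrow> (\<exists>g'. continuous_on S g' \<and>
      (\<forall>x\<in>S. (g has_real_derivative g' x) (at x within S)))"

definition C1_diffeo_onto_image :: "(real \<Rightarrow> real) \<Rightarrow> bool" where
  "C1_diffeo_onto_image f \<longleftrightarrow>
     f ` {0..1} \<subseteq> {0..1} \<and> inj_on f {0..1} \<and> C1_on {0..1} f \<and>
     C1_on (f ` {0..1}) (the_inv_into {0..1} f)"

definition orient_pres :: "(real \<Rightarrow> real) \<Rightarrow> bool" where
  "orient_pres g \<longleftrightarrow> (\<forall>x\<in>{0..1}. \<forall>y\<in>{0..1}. x < y \<longrightarrow> g x < g y)"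

definition orient_rev :: "(real \<Rightarrow> real) \<Rightarrow> bool" where
  "orient_rev g \<longleftrightarrow> (\<forall>x\<in>{0..1}. \<forall>y\<in>{0..1}. x < y \<longrightarrow> g y < g x)"

definition I_P :: "nat \<Rightarrow> (nat \<Rightarrow> real \<Rightarrow> real) \<Rightarrow> nat set" where
  "I_P N f = {i\<in>{1..N}. orient_pres (f i)}"

definition I_R :: "nat \<Rightarrow> (nat \<Rightarrow> real \<Rightarrow> real) \<Rightarrow> nat set" where
  "I_R N f = {i\<in>{1..N}. orient_rev (f i)}"

text \<open>The 2N x 2N transition matrix (entries indexed by 1..2N).  Note that
  "i - N \<in> I_P" is only meaningful for i > N; we make this explicit.\<close>
definition trans_mat :: "nat \<Rightarrow> (nat \<Rightarrow> real \<Rightarrow> real) \<Rightarrow> nat \<Rightarrow> nat \<Rightarrow> nat" where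
  "trans_mat N f i j =
    (if i \<in> {1..2*N} \<and> j \<in> {1..2*N} \<and>
        ((i \<in> I_P N f \<and> j \<in> {1..N}) \<or>
         (i \<in> I_R N f \<and> j \<in> {N+1..2*N}) \<or>
         (i > N \<and> i - N \<in> I_P N f \<and> j \<in> {N+1..2*N}) \<or>
         (i > N \<and> i - N \<in> I_R N f \<and> j \<in> {1..N}))
     then 1 else 0)"

definition Sigma_A :: "nat \<Rightarrow> (nat \<Rightarrow> nat \<Rightarrow> nat) \<Rightarrow> (int \<Rightarrow> nat) set" where
  "Sigma_A N A = {\<omega>. (\<forall>n. \<omega> n \<in> {1..2*N}) \<and> (\<forall>n. A (\<omega> n) (\<omega> (n+1)) = 1)}"

definition Sigma_full :: "nat \<Rightarrow> (int \<Rightarrow> nat) set" where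
  "Sigma_full N = {\<omega>. \<forall>n. \<omega> n \<in> {1..N}}"

definition shift :: "(int \<Rightarrow> nat) \<Rightarrow> (int \<Rightarrow> nat)" where
  "shift \<omega> = (\<lambda>n. \<omega> (n+1))"

definition bar :: "nat \<Rightarrow> nat \<Rightarrow> nat" where
  "bar N i = (if i \<le> N then i else i - N)"

definition proj :: "nat \<Rightarrow> (int \<Rightarrow> nat) \<Rightarrow> (int \<Rightarrow> nat)" where
  "proj N \<omega> = (\<lambda>n. bar N (\<omega> n))"

end

theory Submission imports Defs begin

text \<open>A continuous injection of \<open>[0,1]\<close> is strictly monotone, so every symbol \<open>i \<le> N\<close> lies in
  exactly one of \<open>I_P\<close>, \<open>I_R\<close>.  View \<open>{1..2N}\<close> as two sheets over \<open>{1..N}\<close>, with \<open>i\<close> and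
  \<open>i + N\<close> above \<open>i\<close>: the matrix \<open>A\<close> allows \<open>i \<rightarrow> j\<close> exactly when \<open>j\<close> stays on the sheet of
  \<open>i\<close> if \<open>f\<^bsub>bar i\<^esub>\<close> preserves orientation and switches sheets if it reverses it.  Hence
  the admissible lifts of \<open>x \<in> \<Sigma>\<^sub>N\<close> correspond to sheet sequences \<open>u : \<int> \<rightarrow> bool\<close> with
  \<open>u (n+1) = u n xor (x n \<in> I_R)\<close>, and there are exactly two of these, one for each choice
  of \<open>u 0\<close>.\<close>

lemma C1_on_imp_continuous_on: "C1_on S g \<Longrightarrow> continuous_on S g"
  unfolding C1_on_def
  by (meson DERIV_continuous continuous_on_eq_continuous_within)

lemma C1_diffeo_orient_pres_or_rev:
  assumes "C1_diffeo_onto_image g"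
  shows "orient_pres g \<or> orient_rev g"
proof -
  have "continuous_on {0..1} g" "inj_on g {0..1}"
    using assms C1_on_imp_continuous_on unfolding C1_diffeo_onto_image_def by auto
  then have "strict_mono_on {0..1} g \<or> strict_antimono_on {0..1} g"
    by (simp add: injective_eq_monotone_map)
  then show ?thesis
    unfolding orient_pres_def orient_rev_def monotone_on_def by blast
qed

lemma not_orient_pres_and_rev: "\<not> (orient_pres g \<and> orient_rev g)"
  unfolding orient_pres_def orient_rev_def
  by (metis atLeastAtMost_iff order_refl zero_le_one zero_less_one order_less_asym)

lemma I_P_Int_I_R: "I_P N f \<inter> I_R N f = {}"
  using not_orient_pres_and_rev unfolding I_P_def I_R_def by blast

lemma I_P_Un_I_R:
  assumes "\<forall>i\<in>{1..N}. C1_diffeo_onto_image (f i)"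
  shows "I_P N f \<union> I_R N f = {1..N}"
  using assms C1_diffeo_orient_pres_or_rev unfolding I_P_def I_R_def by blast

lemma trans_mat_eq_1_iff:
  assumes "I_P N f \<union> I_R N f = {1..N}"
  shows "trans_mat N f i j = 1 \<longleftrightarrow>
    i \<in> {1..2*N} \<and> j \<in> {1..2*N} \<and> (N < j) = ((N < i) \<noteq> (bar N i \<in> I_R N f))"
proof (cases "i \<le> N")
  case True
  then have "i \<in> {1..2*N} \<Longrightarrow> (i \<in> I_P N f) = (i \<notin> I_R N f)"
    using assms I_P_Int_I_R[of N f] by auto
  then show ?thesis using True unfolding trans_mat_def bar_def by auto
next
  case False
  then have "i \<in> {1..2*N} \<Longrightarrow> i - N \<in> I_P N f \<union> I_R N f"
    using assms by auto
  then have "i \<in> {1..2*N} \<Longrightarrow> (i - N \<in> I_P N f) = (i - N \<notin> I_R N f)"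
    using I_P_Int_I_R[of N f] by blast
  moreover have "i \<notin> I_P N f" "i \<notin> I_R N f"
    using False assms by auto
  ultimately show ?thesis using False unfolding trans_mat_def bar_def by auto
qed

lemma exists_xor_recurrence_solution:
  fixes r :: "int \<Rightarrow> bool"
  shows "\<exists>c. \<forall>n. c (n + 1) = (c n \<noteq> r n)"
proof -
  define pos where "pos n = {0..<n} \<inter> Collect r" for n :: int
  define neg where "neg n = {n..<0} \<inter> Collect r" for n :: int
  define c where "c n = (odd (card (pos n)) \<noteq> odd (card (neg n)))" for n :: int
  have fin: "finite (pos n)" "finite (neg n)" for n
    unfolding pos_def neg_def by auto
  have "c (n + 1) = (c n \<noteq> r n)" for n
  proof (cases "0 \<le> n")
    case True
    then have "pos (n + 1) = (if r n then insert n (pos n) else pos n)" "n \<notin> pos n"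
      and "neg (n + 1) = {}" "neg n = {}"
      unfolding pos_def neg_def by (auto simp: le_less)
    then show ?thesis unfolding c_def using fin by simp
  next
    case False
    then have "neg n = (if r n then insert n (neg (n + 1)) else neg (n + 1))" "n \<notin> neg (n + 1)"
      and "pos (n + 1) = {}" "pos n = {}"
      unfolding pos_def neg_def by (auto simp: le_less)
    then show ?thesis unfolding c_def using fin by simp
  qed
  then show ?thesis by blast
qed

lemma card_xor_recurrence_solutions:
  fixes r :: "int \<Rightarrow> bool"
  shows "card {u. \<forall>n. u (n + 1) = (u n \<noteq> r n)} = 2"
proof -
  obtain c where c: "\<forall>n. c (n + 1) = (c n \<noteq> r n)"
    using exists_xor_recurrence_solution by blast
  have "u = c \<or> u = (\<lambda>n. \<not> c n)" if u: "\<forall>n. u (n + 1) = (u n \<noteq> r n)" for u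
  proof -
    have "(u n = c n) = (u 0 = c 0)" for n
    proof (induction n rule: int_induct[where k = 0])
      case (step2 i)
      then show ?case using u c by (metis diff_add_cancel)
    qed (use u c in auto)
    then show ?thesis by (cases "u 0 = c 0") auto
  qed
  then have "{u. \<forall>n. u (n + 1) = (u n \<noteq> r n)} = {c, \<lambda>n. \<not> c n}"
    using c by auto
  moreover have "c \<noteq> (\<lambda>n. \<not> c n)" by (metis (full_types))
  ultimately show ?thesis by simp
qed

definition sheet_lift :: "nat \<Rightarrow> (int \<Rightarrow> nat) \<Rightarrow> (int \<Rightarrow> bool) \<Rightarrow> int \<Rightarrow> nat" where
  "sheet_lift N x u n = (if u n then x n + N else x n)"

lemma Sigma_full_range: "x \<in> Sigma_full N \<Longrightarrow> x n \<in> {1..N}"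
  unfolding Sigma_full_def by blast

lemma upper_sheet_lift_iff: "x \<in> Sigma_full N \<Longrightarrow> N < sheet_lift N x u n \<longleftrightarrow> u n"
  using Sigma_full_range[of x N n] unfolding sheet_lift_def by auto

lemma bar_sheet_lift: "x \<in> Sigma_full N \<Longrightarrow> bar N (sheet_lift N x u n) = x n"
  using Sigma_full_range[of x N n] unfolding sheet_lift_def bar_def by auto

lemma sheet_lift_range: "x \<in> Sigma_full N \<Longrightarrow> sheet_lift N x u n \<in> {1..2*N}"
  using Sigma_full_range[of x N n] unfolding sheet_lift_def by auto

lemma inj_sheet_lift: "x \<in> Sigma_full N \<Longrightarrow> inj (sheet_lift N x)"
  by (rule injI, rule ext) (metis upper_sheet_lift_iff)

lemma proj_fiber_eq_image_sheet_lift: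
  assumes cover: "I_P N f \<union> I_R N f = {1..N}" and x: "x \<in> Sigma_full N"
  shows "{\<omega> \<in> Sigma_A N (trans_mat N f). proj N \<omega> = x} =
    sheet_lift N x ` {u. \<forall>n. u (n + 1) = (u n \<noteq> (x n \<in> I_R N f))}"
proof (intro equalityI subsetI)
  fix \<omega> assume "\<omega> \<in> {\<omega> \<in> Sigma_A N (trans_mat N f). proj N \<omega> = x}"
  then have range: "\<And>n. \<omega> n \<in> {1..2*N}"
    and step: "\<And>n. trans_mat N f (\<omega> n) (\<omega> (n + 1)) = 1"
    and bar: "\<And>n. bar N (\<omega> n) = x n"
    unfolding Sigma_A_def proj_def by (auto dest: fun_cong)
  define u where "u n = (N < \<omega> n)" for n
  have "\<omega> = sheet_lift N x u"
    using range bar unfolding sheet_lift_def u_def bar_def by (force split: if_splits)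
  moreover have "u (n + 1) = (u n \<noteq> (x n \<in> I_R N f))" for n
    using step[of n] bar[of n] unfolding trans_mat_eq_1_iff[OF cover] u_def by simp
  ultimately show "\<omega> \<in> sheet_lift N x ` {u. \<forall>n. u (n + 1) = (u n \<noteq> (x n \<in> I_R N f))}"
    by blast
next
  fix \<omega> assume "\<omega> \<in> sheet_lift N x ` {u. \<forall>n. u (n + 1) = (u n \<noteq> (x n \<in> I_R N f))}"
  then obtain u where \<omega>: "\<omega> = sheet_lift N x u" and u: "\<forall>n. u (n + 1) = (u n \<noteq> (x n \<in> I_R N f))"
    by blast
  have "trans_mat N f (\<omega> n) (\<omega> (n + 1)) = 1" for n
    unfolding trans_mat_eq_1_iff[OF cover] \<omega>
    using u sheet_lift_range[OF x] by (simp add: upper_sheet_lift_iff[OF x] bar_sheet_lift[OF x])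
  moreover have "proj N \<omega> = x"
    unfolding proj_def \<omega> using x by (simp add: bar_sheet_lift)
  ultimately show "\<omega> \<in> {\<omega> \<in> Sigma_A N (trans_mat N f). proj N \<omega> = x}"
    unfolding Sigma_A_def \<omega> using sheet_lift_range[OF x] by simp
qed

lemma card_proj_fiber:
  assumes "I_P N f \<union> I_R N f = {1..N}" and x: "x \<in> Sigma_full N"
  shows "card {\<omega> \<in> Sigma_A N (trans_mat N f). proj N \<omega> = x} = 2"
  unfolding proj_fiber_eq_image_sheet_lift[OF assms]
  unfolding card_image[OF inj_on_subset[OF inj_sheet_lift[OF x] subset_UNIV]]
  by (rule card_xor_recurrence_solutions)

lemma bar_range: "i \<in> {1..2*N} \<Longrightarrow> bar N i \<in> {1..N}"
  unfolding bar_def by auto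

lemma proj_Sigma_A_subset: "proj N ` Sigma_A N A \<subseteq> Sigma_full N"
  unfolding Sigma_A_def Sigma_full_def proj_def using bar_range by blast

lemma shift_Sigma_A_subset: "shift ` Sigma_A N A \<subseteq> Sigma_A N A"
  unfolding Sigma_A_def shift_def by (auto simp: add.assoc)

lemma proj_shift: "proj N (shift \<omega>) = shift (proj N \<omega>)"
  unfolding proj_def shift_def ..

lemma continuous_on_proj: "continuous_on UNIV (proj N)"
  unfolding proj_def
proof (rule continuous_on_coordinatewise_then_product)
  fix n :: int
  show "continuous_on UNIV (\<lambda>\<omega>::int \<Rightarrow> nat. bar N (\<omega> n))"
    using continuous_on_compose[OF continuous_on_product_coordinates
          Topological_Spaces.continuous_on_discrete]
    by (simp add: o_def)
qed

theorem lemma3p2: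
  fixes N :: nat and f :: "nat \<Rightarrow> real \<Rightarrow> real"
  assumes "\<forall>i\<in>{1..N}. C1_diffeo_onto_image (f i)"
  defines "SA \<equiv> Sigma_A N (trans_mat N f)"
  shows "continuous_on SA (proj N) \<and>
         proj N ` SA = Sigma_full N \<and>
         shift ` SA \<subseteq> SA \<and>
         (\<forall>\<omega>\<in>SA. proj N (shift \<omega>) = shift (proj N \<omega>)) \<and>
         (\<forall>x\<in>Sigma_full N. card {\<omega>\<in>SA. proj N \<omega> = x} = 2)"
proof -
  have fiber: "card {\<omega> \<in> SA. proj N \<omega> = x} = 2" if "x \<in> Sigma_full N" for x
    unfolding SA_def using card_proj_fiber[OF I_P_Un_I_R[OF assms(1)] that] .
  have "Sigma_full N \<subseteq> proj N ` SA"
  proof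
    fix x assume "x \<in> Sigma_full N"
    then have "{\<omega> \<in> SA. proj N \<omega> = x} \<noteq> {}"
      using fiber by (metis card.empty zero_neq_numeral)
    then show "x \<in> proj N ` SA" by blast
  qed
  then have "proj N ` SA = Sigma_full N"
    using proj_Sigma_A_subset unfolding SA_def by blast
  then show ?thesis
    using continuous_on_subset[OF continuous_on_proj] shift_Sigma_A_subset proj_shift fiber
    unfolding SA_def by blast
qed

end
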